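(* Let $X$ be a hyperbolic approximation with parameter $r$ of a metric space $Z$, and let $v_1,v_2$ be any two vertices of $X$. If $w$ is a branch point of $\{v_1,v_2\}$, then \[\frac{r^2}{4}\,\operatorname{diam}(B(w))\le\operatorname{diam}(B(v_1)\cup B(v_2)),\] i.e. $\frac{r^2}{4}\le\frac{\operatorname{diam}(B(v_1)\cup B(v_2))}{\operatorname{diam}(B(w))}$ whenever $\operatorname{diam}(B(w))>0$.
   Context: Hyperbolic approximation: let $(Z,d)$ be a metric space and fix a parameter $r$ with $0<r\le1/6$. For every $k\in\mathbb{Z}$ choose a maximal $r^k$-separated set $V_k\subset Z$ (distinct points at distance $\ge r^k$, maximal with this property). For $v\in V_k$ let $B(v)$ be the ball in $Z$ of radius $2r^k$ centred at $v$, $\bar B(v)$ the closed ball. The vertex set $V$ consists, for each $k$, of the balls $B(v)$, $v\in V_k$ (equal balls from the same level give the same vertex; equal balls at different levels are different vertices); a vertex from level $k$ has level $l(v)=k$. Two vertices are joined by an edge iff they are on the same level and their closed balls intersect (horizontal edge), or they are on neighbouring levels $k,k+1$ and the ball of the level-$(k+1)$ vertex is contained in the ball of the level-$k$ vertex (radial edge). $X$ carries the path metric with all edges of length $1$. A radial geodesic is an edge path all of whose edges are radial and along which the level function is monotone. For $V'\subset V$, a vertex $u$ is a cone point of $V'$ if $l(u)\le\inf_{v\in V'}l(v)$ and every $v\in V'$ is connected to $u$ by a radial geodesic; a branch point of $V'$ is a cone point of maximal level. *)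

theory Defs
  imports "HOL-Analysis.Analysis"
begin

text \<open>The metric space Z is the whole carrier of a type of class metric_space.
  A vertex of the hyperbolic approximation is a pair (k, B) of its level k and
  its ball B = ball v (2 r^k) with v in V k (so equal balls on the same level
  give the same vertex, equal balls on different levels different vertices).\<close>

definition separated_set :: "real \<Rightarrow> 'a::metric_space set \<Rightarrow> bool" where
  "separated_set e S \<longleftrightarrow> (\<forall>x\<in>S. \<forall>y\<in>S. x \<noteq> y \<longrightarrow> e \<le> dist x y)"

definition maximal_separated_set :: "real \<Rightarrow> 'a::metric_space set \<Rightarrow> bool" where
  "maximal_separated_set e S \<longleftrightarrow>
     separated_set e S \<and> (\<forall>T. S \<subseteq> T \<and> separated_set e T \<longrightarrow> T = S)"

definition hyp_approx_data :: "real \<Rightarrow> (int \<Rightarrow> 'a::metric_space set) \<Rightarrow> bool" where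
  "hyp_approx_data r V \<longleftrightarrow> 0 < r \<and> r \<le> 1/6 \<and> (\<forall>k. maximal_separated_set (r powi k) (V k))"

definition hyp_vertices :: "real \<Rightarrow> (int \<Rightarrow> 'a::metric_space set) \<Rightarrow> (int \<times> 'a set) set" where
  "hyp_vertices r V = {(k, ball v (2 * r powi k)) | k v. v \<in> V k}"

text \<open>Radial edges (horizontal edges are never used by radial geodesics).\<close>
definition radial_edge :: "real \<Rightarrow> (int \<Rightarrow> 'a::metric_space set) \<Rightarrow> int \<times> 'a set \<Rightarrow> int \<times> 'a set \<Rightarrow> bool" where
  "radial_edge r V a b \<longleftrightarrow> a \<in> hyp_vertices r V \<and> b \<in> hyp_vertices r V \<and>
     ((fst b = fst a + 1 \<and> snd b \<subseteq> snd a) \<or> (fst a = fst b + 1 \<and> snd a \<subseteq> snd b))"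

definition radial_geodesic :: "real \<Rightarrow> (int \<Rightarrow> 'a::metric_space set) \<Rightarrow> (int \<times> 'a set) list \<Rightarrow> bool" where
  "radial_geodesic r V p \<longleftrightarrow> p \<noteq> [] \<and> set p \<subseteq> hyp_vertices r V \<and>
     (\<forall>i. Suc i < length p \<longrightarrow> radial_edge r V (p ! i) (p ! Suc i)) \<and>
     ((\<forall>i j. i \<le> j \<and> j < length p \<longrightarrow> fst (p ! i) \<le> fst (p ! j)) \<or>
      (\<forall>i j. i \<le> j \<and> j < length p \<longrightarrow> fst (p ! j) \<le> fst (p ! i)))"

definition radially_connected :: "real \<Rightarrow> (int \<Rightarrow> 'a::metric_space set) \<Rightarrow> int \<times> 'a set \<Rightarrow> int \<times> 'a set \<Rightarrow> bool" where
  "radially_connected r V u v \<longleftrightarrow> (\<exists>p. radial_geodesic r V p \<and> hd p = v \<and> last p = u)"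

definition cone_point :: "real \<Rightarrow> (int \<Rightarrow> 'a::metric_space set) \<Rightarrow> (int \<times> 'a set) set \<Rightarrow> int \<times> 'a set \<Rightarrow> bool" where
  "cone_point r V W u \<longleftrightarrow> u \<in> hyp_vertices r V \<and> (\<forall>v\<in>W. fst u \<le> fst v) \<and>
     (\<forall>v\<in>W. radially_connected r V u v)"

definition branch_point :: "real \<Rightarrow> (int \<Rightarrow> 'a::metric_space set) \<Rightarrow> (int \<times> 'a set) set \<Rightarrow> int \<times> 'a set \<Rightarrow> bool" where
  "branch_point r V W u \<longleftrightarrow> cone_point r V W u \<and> (\<forall>u'. cone_point r V W u' \<longrightarrow> fst u' \<le> fst u)"

end

theory Submission
  imports Defs
begin

text \<open>Let the branch point w lie on level k. If k is the level of v1 or v2, then w is that vertex,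
  because a radial geodesic between distinct vertices of the same level cannot exist. Otherwise
  maximality of k says there is no cone point on level k + 1. But if the centres x1, x2 of v1, v2
  were closer than r^(k+1)/2, a point of V(k+1) within 3/2 r^(k+1) of both would be a cone point:
  from it one descends radially towards x1 (and x2) through points of the finer nets near x1,
  and r \<le> 1/6 keeps each ball of the descent inside its predecessor. Hence
  diam (B v1 \<union> B v2) \<ge> dist x1 x2 \<ge> r^(k+1)/2 \<ge> r^2/4 \<cdot> 4 r^k \<ge> r^2/4 \<cdot> diam B(w).\<close>

lemma maximal_separated_set_dist_lt:
  assumes "maximal_separated_set e S" "0 < e"
  shows "\<exists>y\<in>S. dist x y < e"
proof (rule ccontr)
  assume "\<not> ?thesis"
  then have far: "\<forall>y\<in>S. e \<le> dist x y" by (simp add: not_less)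
  then have "separated_set e (insert x S)"
    using assms(1) unfolding maximal_separated_set_def separated_set_def
    by (auto simp: dist_commute)
  then have "x \<in> S" using assms(1) unfolding maximal_separated_set_def by blast
  with far assms(2) show False by force
qed

lemma diameter_ball_le:
  fixes c :: "'a::metric_space"
  assumes "0 < \<rho>"
  shows "diameter (ball c \<rho>) \<le> 2 * \<rho>"
proof (rule ccontr)
  assume "\<not> ?thesis"
  then obtain x y where "x \<in> ball c \<rho>" "y \<in> ball c \<rho>" "2 * \<rho> < dist x y"
    using diameter_lower_bounded[of "ball c \<rho>" "2 * \<rho>"] assms by auto
  moreover have "dist x y \<le> dist c x + dist c y"
    by (metis dist_commute dist_triangle)
  ultimately show False by simp
qed

lemma radial_geodesic_descending:
  assumes "\<And>j. j \<le> d \<Longrightarrow> (m - int j, B j) \<in> hyp_vertices r V"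
    and "\<And>j. j < d \<Longrightarrow> B j \<subseteq> B (Suc j)"
  shows "radial_geodesic r V (map (\<lambda>j. (m - int j, B j)) [0..<Suc d])"
  using assms unfolding radial_geodesic_def radial_edge_def
  by (auto simp del: upt_Suc) (metis Suc_leI of_nat_Suc add.commute)

lemma radially_connected_descent:
  assumes H: "hyp_approx_data r V"
    and x: "x \<in> V m" and c: "c \<in> V n" and "n \<le> m"
    and same: "n = m \<Longrightarrow> c = x"
    and close: "dist x c < 3/2 * r powi n"
  shows "radially_connected r V (n, ball c (2 * r powi n)) (m, ball x (2 * r powi m))"
proof -
  have r: "0 < r" "r \<le> 1/6" and ms: "\<And>k. maximal_separated_set (r powi k) (V k)"
    using H unfolding hyp_approx_data_def by auto
  have "\<forall>k. \<exists>y. y \<in> V k \<and> dist x y < r powi k"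
    using maximal_separated_set_dist_lt[OF ms] r(1) by fastforce
  then obtain f where f: "\<And>k. f k \<in> V k" "\<And>k. dist x (f k) < r powi k"
    by metis
  define d where "d = nat (m - n)"
  have lev_d: "m - int d = n" using \<open>n \<le> m\<close> by (simp add: d_def)
  define Y where "Y j = (if j = d then c else if j = 0 then x else f (m - int j))" for j
  have Y_V: "Y j \<in> V (m - int j)" if "j \<le> d" for j
    using x c f(1) lev_d by (simp add: Y_def)
  have Y_near: "dist x (Y j) < r powi (m - int j)" if "j < d" for j
    using f(2) r(1) that by (simp add: Y_def)
  have Y_close: "dist x (Y j) < 3/2 * r powi (m - int j)" if "j \<le> d" for j
  proof (cases "j = d")
    case True
    then show ?thesis using close lev_d by (simp add: Y_def)
  next
    case False
    moreover have "0 < r powi (m - int j)" using r(1) by simp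
    ultimately show ?thesis using Y_near[of j] that by simp
  qed
  have nested: "ball (Y j) (2 * r powi (m - int j)) \<subseteq> ball (Y (Suc j)) (2 * r powi (m - int (Suc j)))"
    if "j < d" for j
  proof -
    define \<rho> where "\<rho> = r powi (m - int (Suc j))"
    have "m - int j = (m - int (Suc j)) + 1" by simp
    then have \<rho>: "0 < \<rho>" "r powi (m - int j) = r * \<rho>"
      using r(1) power_int_add_1[of r "m - int (Suc j)"] unfolding \<rho>_def by simp_all
    have "dist (Y j) (Y (Suc j)) < r * \<rho> + 3/2 * \<rho>"
      using dist_triangle3[of "Y j" "Y (Suc j)" x] Y_near[OF that] Y_close[of "Suc j"] that
      unfolding \<rho>(2) \<rho>_def by simp
    moreover have "3 * (r * \<rho>) \<le> \<rho> / 2" using r \<rho>(1) by simp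
    ultimately show ?thesis
      using Met_TC.mball_subset[of "Y j" "Y (Suc j)" "2 * (r * \<rho>)" "2 * \<rho>"]
      unfolding \<rho>(2) \<rho>_def by simp
  qed
  define p where "p = map (\<lambda>j. (m - int j, ball (Y j) (2 * r powi (m - int j)))) [0..<Suc d]"
  have "radial_geodesic r V p"
    unfolding p_def using Y_V nested
    by (intro radial_geodesic_descending) (auto simp: hyp_vertices_def)
  moreover have "hd p = (m, ball x (2 * r powi m))"
    using same lev_d by (auto simp: p_def Y_def hd_map simp del: upt_Suc)
  moreover have "last p = (n, ball c (2 * r powi n))"
    using lev_d by (simp add: p_def Y_def last_map del: upt_Suc)
  ultimately show ?thesis unfolding radially_connected_def by blast
qed

lemma radial_geodesic_levels_differ:
  assumes p: "radial_geodesic r V p" and len: "Suc 0 < length p"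
  shows "fst (hd p) \<noteq> fst (last p)"
proof -
  have "p \<noteq> []" using len by auto
  then have ends: "hd p = p ! 0" "last p = p ! (length p - 1)"
    by (simp_all add: hd_conv_nth last_conv_nth)
  have "radial_edge r V (p ! 0) (p ! Suc 0)"
    using p len unfolding radial_geodesic_def by blast
  then have step: "fst (p ! Suc 0) \<noteq> fst (p ! 0)"
    unfolding radial_edge_def by auto
  have inner: "Suc 0 \<le> length p - 1" "length p - 1 < length p" using len by auto
  from p consider
      (up) "\<forall>i j. i \<le> j \<and> j < length p \<longrightarrow> fst (p ! i) \<le> fst (p ! j)"
    | (down) "\<forall>i j. i \<le> j \<and> j < length p \<longrightarrow> fst (p ! j) \<le> fst (p ! i)"
    unfolding radial_geodesic_def by blast
  then show ?thesis
  proof cases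
    case up
    then have "fst (p ! 0) \<le> fst (p ! Suc 0)" "fst (p ! Suc 0) \<le> fst (p ! (length p - 1))"
      using len inner by blast+
    with step ends show ?thesis by simp
  next
    case down
    then have "fst (p ! Suc 0) \<le> fst (p ! 0)" "fst (p ! (length p - 1)) \<le> fst (p ! Suc 0)"
      using len inner by blast+
    with step ends show ?thesis by simp
  qed
qed

lemma radially_connected_same_level:
  assumes "radially_connected r V u v" "fst u = fst v"
  shows "u = v"
proof -
  obtain p where p: "radial_geodesic r V p" "hd p = v" "last p = u"
    using assms(1) unfolding radially_connected_def by blast
  have "\<not> Suc 0 < length p"
    using radial_geodesic_levels_differ[OF p(1)] p(2,3) assms(2) by auto
  moreover have "p \<noteq> []" using p(1) unfolding radial_geodesic_def by blast
  ultimately obtain a where "p = [a]" by (cases p) auto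
  with p show ?thesis by simp
qed

lemma cone_point_of_close_centres:
  assumes H: "hyp_approx_data r V"
    and x1: "x1 \<in> V m1" and x2: "x2 \<in> V m2" and "n \<le> m1" "n \<le> m2"
    and close: "dist x1 x2 < r powi n / 2"
  shows "\<exists>u. cone_point r V {(m1, ball x1 (2 * r powi m1)), (m2, ball x2 (2 * r powi m2))} u
           \<and> fst u = n"
proof -
  have r: "0 < r" and ms: "maximal_separated_set (r powi n) (V n)"
    using H unfolding hyp_approx_data_def by auto
  have rn: "0 < r powi n" using r by simp
  have same_centre: "x1 = x2" if "m1 = n" "m2 = n"
  proof (rule ccontr)
    assume "x1 \<noteq> x2"
    moreover have "x1 \<in> V n" "x2 \<in> V n" using x1 x2 that by simp_all
    ultimately have "r powi n \<le> dist x1 x2"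
      using ms unfolding maximal_separated_set_def separated_set_def by blast
    with close rn show False by simp
  qed
  obtain y where y: "y \<in> V n" "dist x1 y < r powi n"
    using maximal_separated_set_dist_lt[OF ms rn] by blast
  \<comment> \<open>a vertex already on level n can only be radially connected to itself\<close>
  define c where "c = (if m1 = n then x1 else if m2 = n then x2 else y)"
  have c_V: "c \<in> V n" using x1 x2 y(1) unfolding c_def by metis
  have c_1: "c = x1" if "n = m1" using that by (simp add: c_def)
  have c_2: "c = x2" if "n = m2"
    using that same_centre unfolding c_def by metis
  have "dist x1 c < 3/2 * r powi n" "dist x2 c < 3/2 * r powi n"
    using close y(2) rn dist_triangle3[of x2 y x1] dist_commute[of x2 x1]
    unfolding c_def by auto
  then have "radially_connected r V (n, ball c (2 * r powi n)) (m1, ball x1 (2 * r powi m1))"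
    "radially_connected r V (n, ball c (2 * r powi n)) (m2, ball x2 (2 * r powi m2))"
    using radially_connected_descent[OF H x1 c_V \<open>n \<le> m1\<close>]
      radially_connected_descent[OF H x2 c_V \<open>n \<le> m2\<close>] c_1 c_2 by auto
  moreover have "(n, ball c (2 * r powi n)) \<in> hyp_vertices r V"
    using c_V unfolding hyp_vertices_def by blast
  ultimately show ?thesis
    using \<open>n \<le> m1\<close> \<open>n \<le> m2\<close> unfolding cone_point_def
    by (intro exI[of _ "(n, ball c (2 * r powi n))"]) simp
qed

lemma branch_point_centres_far:
  assumes H: "hyp_approx_data r V" and x1: "x1 \<in> V m1" and x2: "x2 \<in> V m2"
    and w: "branch_point r V {(m1, ball x1 (2 * r powi m1)), (m2, ball x2 (2 * r powi m2))} w"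
    and "fst w < m1" "fst w < m2"
  shows "r powi (fst w + 1) / 2 \<le> dist x1 x2"
proof (rule ccontr)
  assume "\<not> ?thesis"
  then obtain u where "cone_point r V {(m1, ball x1 (2 * r powi m1)), (m2, ball x2 (2 * r powi m2))} u"
      "fst u = fst w + 1"
    using cone_point_of_close_centres[OF H x1 x2, of "fst w + 1"] assms(5,6) by auto
  with w show False unfolding branch_point_def by fastforce
qed

lemma scaled_diameter_le_of_subset:
  fixes S T :: "'a::metric_space set"
  assumes "0 \<le> a" "a \<le> 1" "bounded T" "S \<subseteq> T"
  shows "a * diameter S \<le> diameter T"
proof -
  have "diameter S \<le> diameter T" using assms(4,3) by (rule diameter_subset)
  moreover have "0 \<le> diameter S" using assms(3,4) bounded_subset diameter_ge_0 by blast
  ultimately show ?thesis using assms(1,2) by (metis mult_left_le_one_le order_trans)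
qed

lemma scaled_diameter_vertex_ball_le:
  fixes c :: "'a::metric_space"
  assumes "0 < r" "r \<le> 1/6"
  shows "r\<^sup>2 / 4 * diameter (ball c (2 * r powi k)) \<le> r powi (k + 1) / 2"
proof -
  have "r\<^sup>2 / 4 * diameter (ball c (2 * r powi k)) \<le> r\<^sup>2 / 4 * (4 * r powi k)"
    using diameter_ball_le[of "2 * r powi k" c] assms(1) by (intro mult_left_mono) auto
  also have "\<dots> = r * (r powi k * r)" by (simp add: power2_eq_square)
  also have "\<dots> \<le> 1/2 * (r powi k * r)" using assms by (intro mult_right_mono) auto
  also have "\<dots> = r powi (k + 1) / 2" using assms(1) by (simp add: power_int_add_1)
  finally show ?thesis .
qed

theorem lemma3p10:
  fixes r :: real and V :: "int \<Rightarrow> 'a::metric_space set"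
    and v1 v2 w :: "int \<times> 'a set"
  assumes "hyp_approx_data r V"
    and "v1 \<in> hyp_vertices r V" and "v2 \<in> hyp_vertices r V"
    and "branch_point r V {v1, v2} w"
  shows "r\<^sup>2 / 4 * diameter (snd w) \<le> diameter (snd v1 \<union> snd v2)"
proof -
  have r: "0 < r" "r \<le> 1/6" using assms(1) unfolding hyp_approx_data_def by auto
  have cone: "cone_point r V {v1, v2} w" using assms(4) unfolding branch_point_def by blast
  obtain k c where w: "w = (k, ball c (2 * r powi k))"
    using cone unfolding cone_point_def hyp_vertices_def by blast
  obtain m1 x1 where v1: "v1 = (m1, ball x1 (2 * r powi m1))" "x1 \<in> V m1"
    using assms(2) unfolding hyp_vertices_def by blast
  obtain m2 x2 where v2: "v2 = (m2, ball x2 (2 * r powi m2))" "x2 \<in> V m2"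
    using assms(3) unfolding hyp_vertices_def by blast
  have bounded: "bounded (snd v1 \<union> snd v2)" using v1 v2 by simp
  show ?thesis
  proof (cases "k = m1 \<or> k = m2")
    case True
    moreover have "w = v" if "v \<in> {v1, v2}" "fst w = fst v" for v
      using cone that radially_connected_same_level unfolding cone_point_def by blast
    ultimately have "w = v1 \<or> w = v2" using w v1(1) v2(1) by (metis fst_conv insert_iff)
    then show ?thesis
      using r bounded power_le_one[of r 2] by (intro scaled_diameter_le_of_subset) auto
  next
    case False
    then have "k < m1" "k < m2" using cone w v1 v2 unfolding cone_point_def by auto
    then have "r powi (k + 1) / 2 \<le> dist x1 x2"
      using branch_point_centres_far[OF assms(1) v1(2) v2(2)] assms(4) w v1 v2 by fastforce
    also have "\<dots> \<le> diameter (snd v1 \<union> snd v2)"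
      using bounded v1 v2 r(1) by (intro diameter_bounded_bound) auto
    finally show ?thesis using scaled_diameter_vertex_ball_le[OF r, of c k] w by simp
  qed
qed

end
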